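(* Let $k\ge3$ be odd, $p\in[0,1]$ and $q\in[0,1]$, and consider the mean-field Edge-Majority process on the infinite tree $\mathcal T$ with root $v_0$ started from i.i.d. initial states with $\Pr(x_v^{(0)}=\mathcal R)=q$. Then $$\lim_{t\to\infty}\Pr(x_{v_0}^{(t)}=\mathcal R)=\begin{cases}\varphi^+_{p,k} & \text{if } p<p_k^\star \text{ and } q>\varphi^-_{p,k},\\ 0 & \text{if } p<p_k^\star\text{ and } q<\varphi^-_{p,k},\\ 0 & \text{if } p>p_k^\star.\end{cases}$$
   Context: $\mathcal T$ is the infinite rooted tree with root $v_0$ in which every vertex has exactly $k$ children. Each vertex $v$ has a state $x_v^{(t)}\in\{\mathcal R,\mathcal B\}$ at every round $t\in\mathbb N_0$. At $t=0$ each vertex is $\mathcal R$ with probability $q$ and $\mathcal B$ otherwise, independently. For $t\ge0$, each vertex $v$ looks at its $k$ children: for each child $w$, independently of everything else, $v$ sees $w$ as $\mathcal B$ with probability $p$ and otherwise sees $x_w^{(t)}$; then $x_v^{(t+1)}$ is the state seen by the majority of the $k$ children. $F_{p,k}(x)=\Pr[\mathrm{Bin}(k,(1-p)x)\ge(k+1)/2]$. $p_k^\star\in[1/9,1/2)$ is the (unique) value such that: for $0\le p<p_k^\star$, $F_{p,k}(x)=x$ on $[0,1]$ has exactly three solutions $0<\varphi^-_{p,k}<\varphi^+_{p,k}$; for $p=p_k^\star$ exactly two; for $p>p_k^\star$ only $0$. *)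

theory Defs
  imports "HOL-Probability.Probability"
begin

text \<open>Vertices of the infinite k-ary tree are finite lists of child indices
(entries < k); the root v0 is the empty list, the children of v are v @ [i], i < k.\<close>

text \<open>Inl v        : initial state of vertex v; True means R (probability q).
  Inr (v,i,t)  : in round t, vertex v sees its i-th child as B regardless of
                 its state (True, probability p).\<close>

type_synonym em_index = "nat list + nat list \<times> nat \<times> nat"

definition em_space :: "real \<Rightarrow> real \<Rightarrow> (em_index \<Rightarrow> bool) measure" where
  "em_space p q = (\<Pi>\<^sub>M i\<in>UNIV. (case i of
       Inl _ \<Rightarrow> measure_pmf (bernoulli_pmf q)
     | Inr _ \<Rightarrow> measure_pmf (bernoulli_pmf p)))"

text \<open>State of vertex v at round t (True = R). Round t+1: majority of the k
  seen states; since k is odd, R wins iff at least (k+1)/2 children are seen as R.\<close>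

primrec em_state :: "nat \<Rightarrow> (em_index \<Rightarrow> bool) \<Rightarrow> nat list \<Rightarrow> nat \<Rightarrow> bool" where
  "em_state k \<omega> v 0 = \<omega> (Inl v)"
| "em_state k \<omega> v (Suc t) =
     (k + 1 \<le> 2 * card {i. i < k \<and> \<not> \<omega> (Inr (v, i, t)) \<and> em_state k \<omega> (v @ [i]) t})"

definition prob_root_R :: "nat \<Rightarrow> real \<Rightarrow> real \<Rightarrow> nat \<Rightarrow> real" where
  "prob_root_R k p q t = measure (em_space p q) {\<omega> \<in> space (em_space p q). em_state k \<omega> [] t}"

definition F :: "real \<Rightarrow> nat \<Rightarrow> real \<Rightarrow> real" where
  "F p k x = measure_pmf.prob (binomial_pmf k ((1 - p) * x)) {i. k + 1 \<le> 2 * i}"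

definition fixpoints :: "real \<Rightarrow> nat \<Rightarrow> real set" where
  "fixpoints p k = {x \<in> {0..1}. F p k x = x}"

definition p_star :: "nat \<Rightarrow> real" where
  "p_star k = (THE ps. ps \<in> {1/9..<1/2} \<and>
      (\<forall>p. 0 \<le> p \<and> p < ps \<longrightarrow> card (fixpoints p k) = 3) \<and>
      card (fixpoints ps k) = 2 \<and>
      (\<forall>p. ps < p \<and> p \<le> 1 \<longrightarrow> fixpoints p k = {0}))"

text \<open>For p < p_star k the fixed points are 0 < phi_minus < phi_plus.\<close>

definition phi_minus :: "real \<Rightarrow> nat \<Rightarrow> real" where
  "phi_minus p k = Min (fixpoints p k - {0})"

definition phi_plus :: "real \<Rightarrow> nat \<Rightarrow> real" where
  "phi_plus p k = Max (fixpoints p k)"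

end

theory Submission
  imports Defs
begin

(* The state of a vertex at round t depends only on the coins of its subtree, so the k children
   are seen as R independently, each with probability (1 - p) F^(t-1)(q); as a majority of
   k = 2m - 1 binomial trials, the root is R at round t with probability F^t(q).
   Since F is a continuous increasing self-map of [0,1], the orbit of q converges monotonically
   to a fixed point. Writing F(x) = x (1 - p) h((1 - p) x) with h(y) = B(y)/y, where B is the
   majority polynomial, the nonzero fixed points are the solutions of h(y) = 1/(1 - p).
   The ratio h is unimodal on (0,1] (the numerator y B'(y) - B(y) of its derivative first
   increases, then decreases) with maximum H in [9/8, 2), so there are two, one or no nonzero
   fixed points according as (1 - p) H is greater than, equal to or less than 1; this gives
   p_star k = 1 - 1/H, and the sign of F(x) - x between the fixed points selects the limit. *)

section \<open>Majority polynomials\<close>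

definition majority_prob :: "nat \<Rightarrow> real \<Rightarrow> real" where
  "majority_prob m y = (\<Sum>i=m..2*m-1. Bernstein (2*m-1) i y)"

definition majority_deriv_coeff :: "nat \<Rightarrow> real" where
  "majority_deriv_coeff m = real (2*m-1) * real ((2*m-2) choose (m-1))"

lemma has_real_derivative_Bernstein:
  assumes "0 < k"
  shows "(Bernstein n k has_real_derivative
            real n * (Bernstein (n-1) (k-1) y - Bernstein (n-1) k y)) (at y)"
proof -
  have "(Bernstein n k has_real_derivative
          real (n choose k) * (real k * y^(k-1) * (1-y)^(n-k) - y^k * (real (n-k) * (1-y)^(n-k-1)))) (at y)"
    unfolding Bernstein_def[abs_def] by (auto intro!: derivative_eq_intros simp: algebra_simps)
  also have "real (n choose k) * (real k * y^(k-1) * (1-y)^(n-k) - y^k * (real (n-k) * (1-y)^(n-k-1)))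
      = (real (n choose k) * real k) * y^(k-1) * (1-y)^(n-k)
        - (real (n choose k) * real (n-k)) * y^k * (1-y)^(n-k-1)"
    by (simp add: algebra_simps)
  also have "real (n choose k) * real k = real n * real ((n-1) choose (k-1))"
    using times_binomial_minus1_eq[OF assms, of n] by (metis of_nat_mult mult.commute)
  also have "real (n choose k) * real (n-k) = real n * real ((n-1) choose k)"
    using binomial_absorb_comp[of n k] by (metis of_nat_mult mult.commute)
  finally have "(Bernstein n k has_real_derivative
      real n * real ((n-1) choose (k-1)) * y^(k-1) * (1-y)^(n-k)
      - real n * real ((n-1) choose k) * y^k * (1-y)^(n-k-1)) (at y)" .
  moreover have "n - 1 - (k - 1) = n - k" "n - 1 - k = n - k - 1"
    using assms by auto
  ultimately show ?thesis
    unfolding Bernstein_def by (simp add: algebra_simps)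
qed

lemma has_real_derivative_majority_prob:
  assumes "m \<ge> 1"
  shows "(majority_prob m has_real_derivative majority_deriv_coeff m * (y*(1-y))^(m-1)) (at y)"
proof -
  define n where "n = 2*m-1"
  define b where "b j = Bernstein (n-1) j y" for j
  have "(majority_prob m has_real_derivative (\<Sum>i=m..n. real n * (b (i-1) - b i))) (at y)"
    unfolding majority_prob_def[abs_def] n_def b_def
    by (intro DERIV_sum has_real_derivative_Bernstein) (use assms in auto)
  moreover have "(\<Sum>i=m..n. b (i-1) - b i) = b (m-1) - b n"
  proof -
    have "{m..n} = {Suc (m-1)..Suc (n-1)}"
      using assms n_def by auto
    then have "(\<Sum>i=m..n. b (i-1) - b i) = (\<Sum>j=m-1..n-1. b j - b (Suc j))"
      by (simp only: sum.shift_bounds_cl_Suc_ivl diff_Suc_1)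
    also have "\<dots> = b (m-1) - b (Suc (n-1))"
      using sum_Suc_diff[of "m-1" "n-1" "\<lambda>j. - b j"] assms n_def by simp
    also have "Suc (n-1) = n"
      using assms n_def by simp
    finally show ?thesis .
  qed
  moreover have "b n = 0"
    unfolding b_def Bernstein_def using assms n_def by (simp add: binomial_eq_0)
  ultimately have "(majority_prob m has_real_derivative real n * b (m-1)) (at y)"
    by (simp add: sum_distrib_left[symmetric])
  moreover have "n - 1 = 2*m-2" "2*m-2 - (m-1) = m-1"
    using assms n_def by auto
  then have "b (m-1) = real ((2*m-2) choose (m-1)) * (y*(1-y))^(m-1)"
    unfolding b_def Bernstein_def by (simp add: power_mult_distrib)
  ultimately show ?thesis
    unfolding majority_deriv_coeff_def n_def by (simp add: mult.assoc)
qed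

lemma majority_deriv_coeff_pos: "m \<ge> 1 \<Longrightarrow> majority_deriv_coeff m > 0"
  unfolding majority_deriv_coeff_def by (simp add: zero_less_binomial_iff)

lemma isCont_majority_prob: "m \<ge> 1 \<Longrightarrow> isCont (majority_prob m) y"
  using has_real_derivative_majority_prob DERIV_isCont by blast

lemma majority_prob_0 [simp]: "m \<ge> 1 \<Longrightarrow> majority_prob m 0 = 0"
  unfolding majority_prob_def Bernstein_def by (intro sum.neutral) auto

lemma majority_prob_1 [simp]: "m \<ge> 1 \<Longrightarrow> majority_prob m 1 = 1"
proof -
  assume "m \<ge> 1"
  then have "majority_prob m 1 = (\<Sum>i\<in>{2*m-1}. Bernstein (2*m-1) i 1)"
    unfolding majority_prob_def Bernstein_def by (intro sum.mono_neutral_right) auto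
  then show ?thesis
    by (simp add: Bernstein_def)
qed

lemma prob_binomial_ge_eq_majority_prob:
  assumes "0 \<le> y" "y \<le> 1"
  shows "measure_pmf.prob (binomial_pmf (2*m-1) y) {m..} = majority_prob m y"
proof -
  have "measure_pmf.prob (binomial_pmf (2*m-1) y) {m..} = measure_pmf.prob (binomial_pmf (2*m-1) y) {m..2*m-1}"
    by (rule measure_prob_cong_0) (use assms in auto)
  also have "\<dots> = majority_prob m y"
    unfolding majority_prob_def Bernstein_def using assms by (simp add: measure_measure_pmf_finite)
  finally show ?thesis .
qed

lemma majority_prob_le_1: "0 \<le> y \<Longrightarrow> y \<le> 1 \<Longrightarrow> majority_prob m y \<le> 1"
  using prob_binomial_ge_eq_majority_prob[of y m] by (metis measure_pmf.prob_le_1)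

lemma majority_prob_mono:
  assumes "m \<ge> 1" "0 \<le> s" "s \<le> t" "t \<le> 1"
  shows "majority_prob m s \<le> majority_prob m t"
proof (rule DERIV_nonneg_imp_nondecreasing[OF \<open>s \<le> t\<close>])
  fix x assume "s \<le> x" "x \<le> t"
  then have "majority_deriv_coeff m * (x*(1-x))^(m-1) \<ge> 0"
    using majority_deriv_coeff_pos[of m] assms by simp
  then show "\<exists>y. DERIV (majority_prob m) x :> y \<and> 0 \<le> y"
    using has_real_derivative_majority_prob[OF assms(1)] by blast
qed

lemma majority_deriv_coeff_eq_choose:
  assumes "m \<ge> 1"
  shows "majority_deriv_coeff m = real m * real ((2*m-1) choose m)"
    and "majority_deriv_coeff (Suc m) = (4 * real m + 2) * real ((2*m-1) choose m)"
proof -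
  have "Suc (2*m-2) * ((2*m-2) choose (m-1)) = (Suc (2*m-2) choose Suc (m-1)) * Suc (m-1)"
    by (rule Suc_times_binomial_eq)
  moreover have "Suc (2*m-2) = 2*m-1" "Suc (m-1) = m"
    using assms by auto
  ultimately have "real (2*m-1) * real ((2*m-2) choose (m-1)) = real ((2*m-1) choose m) * real m"
    by (metis of_nat_mult)
  then show "majority_deriv_coeff m = real m * real ((2*m-1) choose m)"
    unfolding majority_deriv_coeff_def by simp
  have "(2*m) choose m = ((2*m-1) choose (m-1)) + ((2*m-1) choose m)"
    using binomial_Suc_Suc[of "2*m-1" "m-1"] assms by (simp add: Suc_diff_Suc)
  moreover have "(2*m-1) choose (m-1) = (2*m-1) choose m"
    using binomial_symmetric[of "m-1" "2*m-1"] assms by (simp add: Suc_diff_Suc)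
  ultimately have "real ((2*m) choose m) = 2 * real ((2*m-1) choose m)"
    by simp
  then show "majority_deriv_coeff (Suc m) = (4 * real m + 2) * real ((2*m-1) choose m)"
    unfolding majority_deriv_coeff_def by simp
qed

text \<open>Condorcet's jury theorem: for \<open>y \<ge> 1/2\<close>, the majority of more voters is more reliable.\<close>

lemma majority_prob_Suc_diff:
  assumes "m \<ge> 1"
  shows "majority_prob (Suc m) y - majority_prob m y
           = real ((2*m-1) choose m) * (y*(1-y))^m * (2*y-1)"
proof -
  define C where "C = real ((2*m-1) choose m)"
  note coeff = majority_deriv_coeff_eq_choose[OF assms, folded C_def]
  define D where "D y = majority_prob (Suc m) y - majority_prob m y - C * (y*(1-y))^m * (2*y-1)" for y
  have "(D has_real_derivative 0) (at x)" for x
  proof -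
    have "(D has_real_derivative
        majority_deriv_coeff (Suc m) * (x*(1-x))^m - majority_deriv_coeff m * (x*(1-x))^(m-1)
        - C * (real m * (x*(1-x))^(m-1) * (1 - 2*x) * (2*x-1) + (x*(1-x))^m * 2)) (at x)"
      unfolding D_def[abs_def] using assms
      by (auto intro!: derivative_eq_intros has_real_derivative_majority_prob simp: algebra_simps)
    moreover
    define w where "w = (x*(1-x))^(m-1)"
    have pow: "(x*(1-x))^m = x*(1-x) * w"
      unfolding w_def using power_minus_mult[of m "x*(1-x)"] assms by (simp add: mult.commute)
    have "majority_deriv_coeff (Suc m) * (x*(1-x))^m - majority_deriv_coeff m * (x*(1-x))^(m-1)
        - C * (real m * (x*(1-x))^(m-1) * (1 - 2*x) * (2*x-1) + (x*(1-x))^m * 2) = 0"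
      unfolding coeff w_def[symmetric] pow by (simp add: algebra_simps)
    ultimately show ?thesis
      by simp
  qed
  then have "D y = D 0"
    using DERIV_isconst_all by blast
  also have "D 0 = 0"
    unfolding D_def using assms by simp
  finally show ?thesis
    unfolding D_def C_def by simp
qed

lemma majority_prob_2_le:
  assumes "m \<ge> 2" "1/2 \<le> y" "y \<le> 1"
  shows "majority_prob 2 y \<le> majority_prob m y"
  using assms(1)
proof (induction m rule: dec_induct)
  case (step m)
  have "0 \<le> real ((2*m-1) choose m) * (y*(1-y))^m * (2*y-1)"
    using assms by simp
  then show ?case
    using step majority_prob_Suc_diff[of m y] by simp
qed simp

section \<open>Unimodality of the majority ratio\<close>

definition majority_ratio :: "nat \<Rightarrow> real \<Rightarrow> real" where
  "majority_ratio m y = majority_prob m y / y"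

definition majority_ratio_numer :: "nat \<Rightarrow> real \<Rightarrow> real" where
  "majority_ratio_numer m y = y * (majority_deriv_coeff m * (y*(1-y))^(m-1)) - majority_prob m y"

lemma has_real_derivative_majority_ratio:
  assumes "m \<ge> 1" "y \<noteq> 0"
  shows "(majority_ratio m has_real_derivative majority_ratio_numer m y / y^2) (at y)"
  unfolding majority_ratio_def[abs_def] majority_ratio_numer_def using assms
  by (auto intro!: derivative_eq_intros has_real_derivative_majority_prob simp: power2_eq_square algebra_simps)

lemma isCont_majority_ratio: "m \<ge> 1 \<Longrightarrow> y \<noteq> 0 \<Longrightarrow> isCont (majority_ratio m) y"
  using has_real_derivative_majority_ratio DERIV_isCont by blast

lemma has_real_derivative_majority_ratio_numer:
  assumes "m \<ge> 2"
  shows "(majority_ratio_numer m has_real_derivative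
            majority_deriv_coeff m * real (m-1) * y * (y*(1-y))^(m-2) * (1 - 2*y)) (at y)"
proof -
  have "m - 1 - 1 = m - 2"
    by simp
  then show ?thesis
    unfolding majority_ratio_numer_def[abs_def] using assms
    by (auto intro!: derivative_eq_intros has_real_derivative_majority_prob simp: algebra_simps)
qed

lemma majority_ratio_numer_strict_mono_on:
  assumes "m \<ge> 2"
  shows "strict_mono_on {0..1/2} (majority_ratio_numer m)"
    and "strict_antimono_on {1/2..1} (majority_ratio_numer m)"
proof -
  let ?g = "majority_ratio_numer m"
  define g' where "g' y = majority_deriv_coeff m * real (m-1) * y * (y*(1-y))^(m-2) * (1 - 2*y)" for y
  have deriv: "(?g has_real_derivative g' y) (at y)" for y
    unfolding g'_def by (rule has_real_derivative_majority_ratio_numer[OF assms])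
  then have cont: "continuous_on A ?g" for A
    by (blast intro: continuous_at_imp_continuous_on DERIV_isCont)
  show "strict_mono_on {0..1/2} ?g"
  proof (rule strict_mono_onI)
    fix s t :: real assume st: "s \<in> {0..1/2}" "t \<in> {0..1/2}" "s < t"
    show "?g s < ?g t"
    proof (rule DERIV_pos_imp_increasing_open[OF \<open>s < t\<close> _ cont])
      fix y assume "s < y" "y < t"
      then have "0 < g' y"
        unfolding g'_def using st assms majority_deriv_coeff_pos[of m] by simp
      then show "\<exists>d. (?g has_real_derivative d) (at y) \<and> 0 < d"
        using deriv by blast
    qed
  qed
  show "strict_antimono_on {1/2..1} ?g"
  proof (rule monotone_onI)
    fix s t :: real assume st: "s \<in> {1/2..1}" "t \<in> {1/2..1}" "s < t"
    show "?g t < ?g s"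
    proof (rule DERIV_neg_imp_decreasing_open[OF \<open>s < t\<close> _ cont])
      fix y assume "s < y" "y < t"
      then have "g' y < 0"
        unfolding g'_def using st assms majority_deriv_coeff_pos[of m] by (simp add: mult_pos_neg)
      then show "\<exists>d. (?g has_real_derivative d) (at y) \<and> d < 0"
        using deriv by blast
    qed
  qed
qed

lemma majority_ratio_numer_sign_change:
  assumes "m \<ge> 2"
  obtains y0 where "1/2 < y0" "y0 < 1"
    "\<And>y. 0 < y \<Longrightarrow> y < y0 \<Longrightarrow> majority_ratio_numer m y > 0"
    "\<And>y. y0 < y \<Longrightarrow> y \<le> 1 \<Longrightarrow> majority_ratio_numer m y < 0"
proof -
  let ?g = "majority_ratio_numer m"
  note increasing = strict_mono_onD[OF majority_ratio_numer_strict_mono_on(1)[OF assms]]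
  note decreasing = monotone_onD[OF majority_ratio_numer_strict_mono_on(2)[OF assms]]
  have isCont: "isCont ?g y" for y
    using has_real_derivative_majority_ratio_numer[OF assms] DERIV_isCont by blast
  have g0: "?g 0 = 0" and g1: "?g 1 = -1"
    unfolding majority_ratio_numer_def using assms by simp_all
  then have g_half: "?g (1/2) > 0"
    using increasing[of 0 "1/2"] by simp
  then obtain y0 where y0: "1/2 \<le> y0" "y0 \<le> 1" "?g y0 = 0"
    using IVT2[of ?g 1 0 "1/2"] g1 isCont by force
  have "y0 \<noteq> 1/2" "y0 \<noteq> 1"
    using y0(3) g_half g1 by force+
  with y0 have "1/2 < y0" "y0 < 1"
    by auto
  moreover have "?g y > 0" if "0 < y" "y < y0" for y
  proof (cases "y \<le> 1/2")
    case True
    then show ?thesis using increasing[of 0 y] g0 that by simp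
  next
    case False
    then show ?thesis using decreasing[of y y0] y0 that by simp
  qed
  moreover have "?g y < 0" if "y0 < y" "y \<le> 1" for y
    using decreasing[of y0 y] y0 that \<open>1/2 < y0\<close> by simp
  ultimately show ?thesis
    using that by blast
qed

lemma majority_ratio_unimodal:
  assumes "m \<ge> 2"
  obtains y0 where "1/2 < y0" "y0 < 1"
    "strict_mono_on {0<..y0} (majority_ratio m)" "strict_antimono_on {y0..1} (majority_ratio m)"
proof -
  obtain y0 where y0: "1/2 < y0" "y0 < 1"
    and numer_pos: "\<And>y. 0 < y \<Longrightarrow> y < y0 \<Longrightarrow> majority_ratio_numer m y > 0"
    and numer_neg: "\<And>y. y0 < y \<Longrightarrow> y \<le> 1 \<Longrightarrow> majority_ratio_numer m y < 0"
    using majority_ratio_numer_sign_change[OF assms] by blast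
  have deriv: "(majority_ratio m has_real_derivative majority_ratio_numer m y / y^2) (at y)"
    if "0 < y" for y
    using has_real_derivative_majority_ratio[of m y] assms that by simp
  have cont: "continuous_on {s..t} (majority_ratio m)" if "0 < s" for s t
    using isCont_majority_ratio[of m] assms that by (intro continuous_at_imp_continuous_on) auto
  have "strict_mono_on {0<..y0} (majority_ratio m)"
  proof (rule strict_mono_onI)
    fix s t assume st: "s \<in> {0<..y0}" "t \<in> {0<..y0}" "s < t"
    show "majority_ratio m s < majority_ratio m t"
    proof (rule DERIV_pos_imp_increasing_open[OF \<open>s < t\<close> _ cont])
      fix y assume "s < y" "y < t"
      then show "\<exists>d. (majority_ratio m has_real_derivative d) (at y) \<and> 0 < d"
        using deriv[of y] numer_pos[of y] st by (intro exI[of _ "majority_ratio_numer m y / y^2"] conjI) auto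
    qed (use st in simp)
  qed
  moreover have "strict_antimono_on {y0..1} (majority_ratio m)"
  proof (rule monotone_onI)
    fix s t assume st: "s \<in> {y0..1}" "t \<in> {y0..1}" "s < t"
    show "majority_ratio m t < majority_ratio m s"
    proof (rule DERIV_neg_imp_decreasing_open[OF \<open>s < t\<close> _ cont])
      fix y assume "s < y" "y < t"
      then show "\<exists>d. (majority_ratio m has_real_derivative d) (at y) \<and> d < 0"
        using deriv[of y] numer_neg[of y] st y0 by (intro exI[of _ "majority_ratio_numer m y / y^2"] conjI) (auto intro: divide_neg_pos)
    qed (use st y0 in simp)
  qed
  ultimately show ?thesis
    using that y0 by blast
qed

definition majority_peak :: "nat \<Rightarrow> real" where
  "majority_peak m = (SOME y0. 1/2 < y0 \<and> y0 < 1 \<and> strict_mono_on {0<..y0} (majority_ratio m)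
                        \<and> strict_antimono_on {y0..1} (majority_ratio m))"

lemma majority_peak:
  assumes "m \<ge> 2"
  shows "1/2 < majority_peak m" "majority_peak m < 1"
    "strict_mono_on {0<..majority_peak m} (majority_ratio m)"
    "strict_antimono_on {majority_peak m..1} (majority_ratio m)"
proof -
  have "\<exists>y0. 1/2 < y0 \<and> y0 < 1 \<and> strict_mono_on {0<..y0} (majority_ratio m)
          \<and> strict_antimono_on {y0..1} (majority_ratio m)"
    using majority_ratio_unimodal[OF assms] by metis
  from someI_ex[OF this] show "1/2 < majority_peak m" "majority_peak m < 1"
    "strict_mono_on {0<..majority_peak m} (majority_ratio m)"
    "strict_antimono_on {majority_peak m..1} (majority_ratio m)"
    unfolding majority_peak_def by blast+
qed

definition majority_ratio_max :: "nat \<Rightarrow> real" where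
  "majority_ratio_max m = majority_ratio m (majority_peak m)"

lemma majority_ratio_less_max:
  assumes "m \<ge> 2" "0 < y" "y \<le> 1" "y \<noteq> majority_peak m"
  shows "majority_ratio m y < majority_ratio_max m"
proof (cases "y < majority_peak m")
  case True
  then show ?thesis
    using strict_mono_onD[OF majority_peak(3)[OF assms(1)]] assms
    unfolding majority_ratio_max_def by auto
next
  case False
  then show ?thesis
    using monotone_onD[OF majority_peak(4)[OF assms(1)]] majority_peak(2)[OF assms(1)] assms
    unfolding majority_ratio_max_def by auto
qed

lemma majority_ratio_le_max:
  "m \<ge> 2 \<Longrightarrow> 0 < y \<Longrightarrow> y \<le> 1 \<Longrightarrow> majority_ratio m y \<le> majority_ratio_max m"
  using majority_ratio_less_max[of m y] by (cases "y = majority_peak m") (auto simp: majority_ratio_max_def)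

lemma majority_ratio_le_inverse: "0 < y \<Longrightarrow> y \<le> 1 \<Longrightarrow> majority_ratio m y \<le> 1 / y"
  unfolding majority_ratio_def using majority_prob_le_1[of y m] by (simp add: divide_right_mono)

lemma majority_ratio_max_less_2:
  assumes "m \<ge> 2"
  shows "majority_ratio_max m < 2"
proof -
  have "majority_ratio_max m \<le> 1 / majority_peak m"
    unfolding majority_ratio_max_def
    using majority_ratio_le_inverse majority_peak(1,2)[OF assms] by simp
  also have "\<dots> < 2"
    using majority_peak(1)[OF assms] by (simp add: field_simps)
  finally show ?thesis .
qed

lemma majority_ratio_max_ge:
  assumes "m \<ge> 2"
  shows "9/8 \<le> majority_ratio_max m"
proof -
  have "majority_prob 2 (3/4) = 27/32"
    by (simp add: majority_prob_def Bernstein_def eval_nat_numeral)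
  then have "9/8 \<le> majority_ratio m (3/4)"
    using majority_prob_2_le[OF assms, of "3/4"] unfolding majority_ratio_def by simp
  also have "\<dots> \<le> majority_ratio_max m"
    using majority_ratio_le_max[OF assms] by simp
  finally show ?thesis .
qed

lemma majority_ratio_tendsto_0:
  assumes "m \<ge> 2"
  shows "(majority_ratio m \<longlongrightarrow> 0) (at 0)"
proof -
  have "(majority_prob m has_real_derivative 0) (at 0)"
    using has_real_derivative_majority_prob[of m 0] assms by (simp add: power_0_left)
  then have "((\<lambda>h. (majority_prob m (0 + h) - majority_prob m 0) / h) \<longlongrightarrow> 0) (at 0)"
    by (simp add: DERIV_def)
  then show ?thesis
    unfolding majority_ratio_def[abs_def] using assms by simp
qed

lemma majority_ratio_attains_level:
  assumes "m \<ge> 2" "1 \<le> c" "c < majority_ratio_max m"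
  obtains y1 y2 where "0 < y1" "y1 < majority_peak m" "majority_peak m < y2" "y2 \<le> 1"
    "majority_ratio m y1 = c" "majority_ratio m y2 = c"
proof -
  let ?r = "majority_ratio m" and ?y0 = "majority_peak m"
  note peak = majority_peak[OF assms(1)]
  have r_peak: "?r ?y0 = majority_ratio_max m"
    unfolding majority_ratio_max_def ..
  have isCont: "isCont ?r y" if "y \<noteq> 0" for y
    using isCont_majority_ratio assms(1) that by simp
  have "(?r \<longlongrightarrow> 0) (at_right 0)"
    using majority_ratio_tendsto_0[OF assms(1)] by (rule filterlim_at_split[THEN iffD1, THEN conjunct2])
  then have "\<forall>\<^sub>F y in at_right 0. ?r y < c \<and> y \<in> {0<..<?y0}"
    using order_tendstoD(2)[of ?r 0 "at_right 0" c] eventually_at_right_real[of 0 ?y0] assms(2) peak(1)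
    by (auto intro: eventually_conj)
  then obtain s where s: "0 < s" "s < ?y0" "?r s < c"
    using eventually_happens'[OF trivial_limit_at_right_real] by force
  obtain y1 where y1: "s \<le> y1" "y1 \<le> ?y0" "?r y1 = c"
    using IVT[of ?r s c ?y0] s assms(3) r_peak isCont by force
  obtain y2 where y2: "?y0 \<le> y2" "y2 \<le> 1" "?r y2 = c"
    using IVT2[of ?r 1 c ?y0] assms r_peak isCont peak(1,2) majority_ratio_def by force
  have "y1 \<noteq> ?y0" "y2 \<noteq> ?y0"
    using y1(3) y2(3) r_peak assms(3) by auto
  then show ?thesis
    using that[of y1 y2] s y1 y2 by simp
qed

lemma majority_ratio_level_set:
  assumes "m \<ge> 2" "1 \<le> c" "c < majority_ratio_max m"
  obtains y1 y2 where "0 < y1" "y1 < y2" "y2 \<le> 1"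
    "{y \<in> {0<..1}. majority_ratio m y = c} = {y1, y2}"
    "\<And>y. 0 < y \<Longrightarrow> y < y1 \<Longrightarrow> majority_ratio m y < c"
    "\<And>y. y1 < y \<Longrightarrow> y < y2 \<Longrightarrow> c < majority_ratio m y"
proof -
  let ?r = "majority_ratio m" and ?y0 = "majority_peak m"
  note peak = majority_peak[OF assms(1)]
  obtain y1 y2 where y1: "0 < y1" "y1 < ?y0" "?r y1 = c" and y2: "?y0 < y2" "y2 \<le> 1" "?r y2 = c"
    using majority_ratio_attains_level[OF assms] by blast
  have below_y1: "?r y < c" if "0 < y" "y < y1" for y
    using strict_mono_onD[OF peak(3), of y y1] that y1 by simp
  have above_y1: "c < ?r y" if "y1 < y" "y < y2" for y
  proof (cases "y \<le> ?y0")
    case True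
    then show ?thesis using strict_mono_onD[OF peak(3), of y1 y] that y1 by simp
  next
    case False
    then show ?thesis using monotone_onD[OF peak(4), of y y2] that y2 by simp
  qed
  have above_y2: "?r y < c" if "y2 < y" "y \<le> 1" for y
    using monotone_onD[OF peak(4), of y2 y] that y2 by simp
  have "{y \<in> {0<..1}. ?r y = c} = {y1, y2}"
  proof (intro equalityI subsetI)
    fix y assume "y \<in> {y \<in> {0<..1}. ?r y = c}"
    then show "y \<in> {y1, y2}"
      using below_y1[of y] above_y1[of y] above_y2[of y]
      by (cases y1 y rule: linorder_cases; cases y2 y rule: linorder_cases) auto
  qed (use y1 y2 in auto)
  then show ?thesis
    using that[of y1 y2] y1 y2 below_y1 above_y1 by simp
qed

section \<open>Iterating a monotone self-map of an interval\<close>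

lemma iterates_in_interval:
  fixes f :: "real \<Rightarrow> real"
  assumes "f ` {a..b} \<subseteq> {a..b}" "x \<in> {a..b}"
  shows "(f ^^ n) x \<in> {a..b}"
  by (induction n) (use assms in \<open>auto simp: image_subset_iff\<close>)

lemma iterates_mono_on_le_fixpoint:
  fixes f :: "real \<Rightarrow> real"
  assumes mono: "mono_on {a..b} f" and range: "f ` {a..b} \<subseteq> {a..b}"
    and z: "z \<in> {a..b}" "f z = z" and x: "x \<in> {a..b}"
  shows "x \<le> z \<Longrightarrow> (f ^^ n) x \<le> z" and "z \<le> x \<Longrightarrow> z \<le> (f ^^ n) x"
proof -
  note iterate_range = iterates_in_interval[OF range x]
  show "x \<le> z \<Longrightarrow> (f ^^ n) x \<le> z"
  proof (induction n)
    case (Suc n)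
    then show ?case
      using mono_onD[OF mono iterate_range z(1)] z(2) by simp
  qed simp
  show "z \<le> x \<Longrightarrow> z \<le> (f ^^ n) x"
  proof (induction n)
    case (Suc n)
    then show ?case
      using mono_onD[OF mono z(1) iterate_range] z(2) by simp
  qed simp
qed

lemma iterates_mono_on_monotone:
  fixes f :: "real \<Rightarrow> real"
  assumes mono: "mono_on {a..b} f" and range: "f ` {a..b} \<subseteq> {a..b}" and x: "x \<in> {a..b}"
  shows "f x \<le> x \<Longrightarrow> decseq (\<lambda>n. (f ^^ n) x)" and "x \<le> f x \<Longrightarrow> incseq (\<lambda>n. (f ^^ n) x)"
proof -
  note iterate_range = iterates_in_interval[OF range x]
  assume "f x \<le> x"
  then have "(f ^^ Suc n) x \<le> (f ^^ n) x" for n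
  proof (induction n)
    case (Suc n)
    then show ?case
      using mono_onD[OF mono iterate_range iterate_range Suc.IH] by simp
  qed simp
  then show "decseq (\<lambda>n. (f ^^ n) x)"
    by (simp add: decseq_SucI)
next
  note iterate_range = iterates_in_interval[OF range x]
  assume "x \<le> f x"
  then have "(f ^^ n) x \<le> (f ^^ Suc n) x" for n
  proof (induction n)
    case (Suc n)
    then show ?case
      using mono_onD[OF mono iterate_range iterate_range Suc.IH] by simp
  qed simp
  then show "incseq (\<lambda>n. (f ^^ n) x)"
    by (simp add: incseq_SucI)
qed

lemma iterates_mono_on_converge:
  fixes f :: "real \<Rightarrow> real"
  assumes cont: "continuous_on {a..b} f" and mono: "mono_on {a..b} f"
    and range: "f ` {a..b} \<subseteq> {a..b}" and x: "x \<in> {a..b}"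
  obtains L where "(\<lambda>n. (f ^^ n) x) \<longlonglongrightarrow> L" "L \<in> {a..b}" "f L = L"
    "f x \<le> x \<Longrightarrow> L \<le> x" "x < f x \<Longrightarrow> x \<le> L"
proof -
  let ?u = "\<lambda>n. (f ^^ n) x"
  note u_range = iterates_in_interval[OF range x]
  obtain L where L: "?u \<longlonglongrightarrow> L" and "f x \<le> x \<Longrightarrow> L \<le> x" "x < f x \<Longrightarrow> x \<le> L"
  proof (cases "f x \<le> x")
    case True
    then obtain L where "?u \<longlonglongrightarrow> L" "\<And>n. L \<le> ?u n"
      using decseq_convergent[of ?u a] iterates_mono_on_monotone(1)[OF mono range x] u_range by auto
    moreover from this(2)[of 0] have "L \<le> x"
      by simp
    ultimately show ?thesis
      using that[of L] True by simp
  next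
    case False
    then obtain L where "?u \<longlonglongrightarrow> L" "\<And>n. ?u n \<le> L"
      using incseq_convergent[of ?u b] iterates_mono_on_monotone(2)[OF mono range x] u_range by auto
    moreover from this(2)[of 0] have "x \<le> L"
      by simp
    ultimately show ?thesis
      using that[of L] False by simp
  qed
  moreover have "L \<in> {a..b}"
    using LIMSEQ_le_const[OF L, of a] LIMSEQ_le_const2[OF L, of b] u_range by auto
  moreover have "f L = L"
  proof -
    have "(\<lambda>n. f (?u n)) \<longlonglongrightarrow> f L"
      using continuous_on_tendsto_compose[OF cont L \<open>L \<in> {a..b}\<close>] u_range by simp
    then have "(\<lambda>n. ?u (Suc n)) \<longlonglongrightarrow> f L"
      by simp
    then show ?thesis
      using LIMSEQ_unique LIMSEQ_Suc[OF L] by blast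
  qed
  ultimately show ?thesis
    using that by blast
qed

section \<open>Fixed points and iterates of F\<close>

context
  fixes k m :: nat
  assumes k_eq: "k = 2*m - 1" and m_ge_2: "m \<ge> 2"
begin

lemma F_eq_majority_prob:
  assumes "0 \<le> p" "p \<le> 1" "0 \<le> x" "x \<le> 1"
  shows "F p k x = majority_prob m ((1-p)*x)"
proof -
  have "{i. k + 1 \<le> 2 * i} = {m..}"
    using k_eq m_ge_2 by auto
  then show ?thesis
    unfolding F_def by (simp only: k_eq, intro prob_binomial_ge_eq_majority_prob)
      (use assms in \<open>auto simp: mult_le_one\<close>)
qed

lemma F_0: "0 \<le> p \<Longrightarrow> p \<le> 1 \<Longrightarrow> F p k 0 = 0"
  using F_eq_majority_prob[of p 0] m_ge_2 by simp

lemma F_1: "0 \<le> x \<Longrightarrow> x \<le> 1 \<Longrightarrow> F 1 k x = 0"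
  using F_eq_majority_prob[of 1 x] m_ge_2 by simp

lemma F_self_map: "F p k ` {0..1} \<subseteq> {0..1}"
  unfolding F_def by auto

lemma F_mono_on:
  assumes "0 \<le> p" "p \<le> 1"
  shows "mono_on {0..1} (F p k)"
proof (rule mono_onI)
  fix x y :: real assume "x \<in> {0..1}" "y \<in> {0..1}" "x \<le> y"
  then show "F p k x \<le> F p k y"
    using assms m_ge_2 F_eq_majority_prob
    by (auto intro!: majority_prob_mono mult_left_mono simp: mult_le_one)
qed

lemma F_continuous_on:
  assumes "0 \<le> p" "p \<le> 1"
  shows "continuous_on {0..1} (F p k)"
proof -
  have "isCont (\<lambda>x. majority_prob m ((1-p)*x)) x" for x
    by (rule isCont_o2[OF _ isCont_majority_prob]) (use m_ge_2 in auto)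
  then have "continuous_on {0..1} (\<lambda>x. majority_prob m ((1-p)*x))"
    by (simp add: continuous_at_imp_continuous_on)
  moreover have "F p k x = majority_prob m ((1-p)*x)" if "x \<in> {0..1}" for x
    using F_eq_majority_prob assms that by simp
  ultimately show ?thesis
    using continuous_on_cong[OF refl, of "{0..1}" "F p k" "\<lambda>x. majority_prob m ((1-p)*x)"] by simp
qed

lemma F_minus_self:
  assumes "0 \<le> p" "p < 1" "0 < x" "x \<le> 1"
  shows "F p k x - x = x * ((1-p) * majority_ratio m ((1-p)*x) - 1)"
  using F_eq_majority_prob[of p x] assms unfolding majority_ratio_def by (simp add: field_simps)

lemma F_less_self_iff:
  assumes "0 \<le> p" "p < 1" "0 < x" "x \<le> 1"
  shows "F p k x < x \<longleftrightarrow> majority_ratio m ((1-p)*x) < 1 / (1-p)"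
proof -
  have "F p k x < x \<longleftrightarrow> F p k x - x < 0"
    by simp
  also have "\<dots> \<longleftrightarrow> (1-p) * majority_ratio m ((1-p)*x) < 1"
    unfolding F_minus_self[OF assms] using assms by (simp add: mult_less_0_iff)
  finally show ?thesis
    using assms by (simp add: pos_less_divide_eq mult.commute)
qed

lemma F_greater_self_iff:
  assumes "0 \<le> p" "p < 1" "0 < x" "x \<le> 1"
  shows "x < F p k x \<longleftrightarrow> 1 / (1-p) < majority_ratio m ((1-p)*x)"
proof -
  have "x < F p k x \<longleftrightarrow> 0 < F p k x - x"
    by simp
  also have "\<dots> \<longleftrightarrow> 1 < (1-p) * majority_ratio m ((1-p)*x)"
    unfolding F_minus_self[OF assms] using assms by (simp add: zero_less_mult_iff)
  finally show ?thesis
    using assms by (simp add: pos_divide_less_eq mult.commute)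
qed

lemma F_eq_self_iff:
  assumes "0 \<le> p" "p < 1" "0 < x" "x \<le> 1"
  shows "F p k x = x \<longleftrightarrow> majority_ratio m ((1-p)*x) = 1 / (1-p)"
proof -
  have "F p k x = x \<longleftrightarrow> F p k x - x = 0"
    by simp
  also have "\<dots> \<longleftrightarrow> (1-p) * majority_ratio m ((1-p)*x) = 1"
    unfolding F_minus_self[OF assms] using assms by simp
  finally show ?thesis
    using assms by (simp add: field_simps)
qed

lemma p_less_1_if_threshold_ge_1: "1 \<le> (1-p) * majority_ratio_max m \<Longrightarrow> p < 1"
  using majority_ratio_max_ge[OF m_ge_2] mult_nonpos_nonneg[of "1-p" "majority_ratio_max m"] by fastforce

lemma nonzero_fixpoints:
  assumes "0 \<le> p" "p < 1"
  shows "fixpoints p k - {0} = (\<lambda>y. y / (1-p)) ` {y \<in> {0<..1}. majority_ratio m y = 1 / (1-p)}"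
proof (intro equalityI subsetI)
  fix x assume "x \<in> fixpoints p k - {0}"
  then have x: "0 < x" "x \<le> 1" "F p k x = x"
    unfolding fixpoints_def by auto
  then have "majority_ratio m ((1-p)*x) = 1 / (1-p)"
    using F_eq_self_iff[of p x] assms by simp
  moreover have "0 < (1-p)*x" "(1-p)*x \<le> 1"
    using x assms by (auto simp: mult_le_one)
  ultimately show "x \<in> (\<lambda>y. y / (1-p)) ` {y \<in> {0<..1}. majority_ratio m y = 1 / (1-p)}"
    using assms by (intro image_eqI[of _ _ "(1-p)*x"]) auto
next
  fix x assume "x \<in> (\<lambda>y. y / (1-p)) ` {y \<in> {0<..1}. majority_ratio m y = 1 / (1-p)}"
  then obtain y where y: "0 < y" "y \<le> 1" "majority_ratio m y = 1 / (1-p)" and x: "x = y / (1-p)"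
    by auto
  have "y \<le> 1 - p"
    using majority_ratio_le_inverse[of y m] y assms by (simp add: field_simps)
  then have "0 < x" "x \<le> 1"
    using x y assms by auto
  moreover have "F p k x = x"
    using F_eq_self_iff[of p x] x y assms \<open>0 < x\<close> \<open>x \<le> 1\<close> by simp
  ultimately show "x \<in> fixpoints p k - {0}"
    unfolding fixpoints_def by simp
qed

lemma zero_in_fixpoints: "0 \<le> p \<Longrightarrow> p \<le> 1 \<Longrightarrow> 0 \<in> fixpoints p k"
  unfolding fixpoints_def using F_0 by simp

lemma fixpoints_above_threshold:
  assumes "0 \<le> p" "p \<le> 1" "(1-p) * majority_ratio_max m < 1"
  shows "fixpoints p k = {0}"
proof (cases "p = 1")
  case True
  then show ?thesis
    unfolding fixpoints_def using F_1 by auto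
next
  case False
  then have "majority_ratio_max m < 1 / (1-p)"
    using assms by (simp add: field_simps)
  then have "{y \<in> {0<..1}. majority_ratio m y = 1 / (1-p)} = {}"
    using majority_ratio_le_max[OF m_ge_2] by force
  then show ?thesis
    using nonzero_fixpoints[of p] zero_in_fixpoints[of p] assms False by auto
qed

lemma fixpoints_at_threshold:
  assumes "0 \<le> p" "(1-p) * majority_ratio_max m = 1"
  shows "card (fixpoints p k) = 2"
proof -
  have p: "p < 1"
    using p_less_1_if_threshold_ge_1 assms by simp
  have "majority_ratio_max m = 1 / (1-p)"
    using assms p by (simp add: field_simps)
  then have "{y \<in> {0<..1}. majority_ratio m y = 1 / (1-p)} = {majority_peak m}"
    using majority_ratio_less_max[OF m_ge_2] majority_peak(1,2)[OF m_ge_2]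
    unfolding majority_ratio_max_def by fastforce
  then have "fixpoints p k - {0} = {majority_peak m / (1-p)}"
    using nonzero_fixpoints[of p] assms p by simp
  moreover have "0 \<in> fixpoints p k"
    using zero_in_fixpoints[of p] assms p by simp
  ultimately have "fixpoints p k = {0, majority_peak m / (1-p)}"
    by auto
  moreover have "majority_peak m / (1-p) \<noteq> 0"
    using majority_peak(1)[OF m_ge_2] p by simp
  ultimately show ?thesis
    by simp
qed

lemma fixpoints_below_threshold:
  assumes "0 \<le> p" "1 < (1-p) * majority_ratio_max m"
  shows "fixpoints p k = {0, phi_minus p k, phi_plus p k}"
    and "0 < phi_minus p k" "phi_minus p k < phi_plus p k" "phi_plus p k \<le> 1"
    and "\<And>x. 0 < x \<Longrightarrow> x < phi_minus p k \<Longrightarrow> F p k x < x"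
    and "\<And>x. phi_minus p k < x \<Longrightarrow> x < phi_plus p k \<Longrightarrow> x < F p k x"
proof -
  have p: "p < 1"
    using p_less_1_if_threshold_ge_1 assms by simp
  have "1 / (1-p) < majority_ratio_max m"
    using assms p by (simp add: field_simps)
  moreover have "1 \<le> 1 / (1-p)"
    using assms p by simp
  ultimately obtain y1 y2 where y: "0 < y1" "y1 < y2" "y2 \<le> 1"
    and level: "{y \<in> {0<..1}. majority_ratio m y = 1 / (1-p)} = {y1, y2}"
    and below: "\<And>y. 0 < y \<Longrightarrow> y < y1 \<Longrightarrow> majority_ratio m y < 1 / (1-p)"
    and above: "\<And>y. y1 < y \<Longrightarrow> y < y2 \<Longrightarrow> 1 / (1-p) < majority_ratio m y"
    using majority_ratio_level_set[OF m_ge_2] by blast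
  have fix_nonzero: "fixpoints p k - {0} = {y1 / (1-p), y2 / (1-p)}"
    using nonzero_fixpoints[of p] assms p level by simp
  have lt: "0 < y1 / (1-p)" "y1 / (1-p) < y2 / (1-p)"
    using y p by (simp_all add: divide_strict_right_mono)
  have "fixpoints p k = {0, y1 / (1-p), y2 / (1-p)}"
    using fix_nonzero zero_in_fixpoints[of p] assms p by auto
  moreover have phi_minus_eq: "phi_minus p k = y1 / (1-p)"
    unfolding phi_minus_def fix_nonzero using lt by simp
  moreover have phi_plus_eq: "phi_plus p k = y2 / (1-p)"
    unfolding phi_plus_def using calculation lt by (simp add: max_def)
  ultimately show fixpoints_eq: "fixpoints p k = {0, phi_minus p k, phi_plus p k}"
    and "0 < phi_minus p k" "phi_minus p k < phi_plus p k"
    using lt by simp_all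
  show le_1: "phi_plus p k \<le> 1"
    using fixpoints_eq unfolding fixpoints_def by auto
  show "F p k x < x" if x: "0 < x" "x < phi_minus p k" for x
  proof -
    have "(1-p)*x < y1"
      using x p unfolding phi_minus_eq by (simp add: pos_less_divide_eq mult.commute)
    then show ?thesis
      using F_less_self_iff[of p x] below[of "(1-p)*x"] x p assms le_1 \<open>phi_minus p k < phi_plus p k\<close>
      by simp
  qed
  show "x < F p k x" if x: "phi_minus p k < x" "x < phi_plus p k" for x
  proof -
    have "y1 < (1-p)*x" "(1-p)*x < y2"
      using x p unfolding phi_minus_eq phi_plus_eq
      by (simp_all add: pos_less_divide_eq pos_divide_less_eq mult.commute)
    then show ?thesis
      using F_greater_self_iff[of p x] above[of "(1-p)*x"] x p assms le_1 \<open>0 < phi_minus p k\<close>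
      by simp
  qed
qed

lemma p_star_eq: "p_star k = 1 - 1 / majority_ratio_max m"
proof -
  define H where "H = majority_ratio_max m"
  have H: "9/8 \<le> H" "H < 2"
    unfolding H_def using majority_ratio_max_ge majority_ratio_max_less_2 m_ge_2 by auto
  define ps where "ps = 1 - 1 / H"
  have ps: "1/9 \<le> ps" "ps < 1/2"
    unfolding ps_def using H by (auto simp: field_simps)
  have below: "card (fixpoints p k) = 3" if "0 \<le> p" "p < ps" for p
  proof -
    have "1 < (1-p) * H"
      using that H unfolding ps_def by (auto simp: field_simps)
    then show ?thesis
      using fixpoints_below_threshold[OF \<open>0 \<le> p\<close>] unfolding H_def by simp
  qed
  have above: "fixpoints p k = {0}" if "ps < p" "p \<le> 1" for p
  proof -
    have "(1-p) * H < 1"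
      using that H unfolding ps_def by (auto simp: field_simps)
    then show ?thesis
      using fixpoints_above_threshold that ps unfolding H_def by simp
  qed
  have at: "card (fixpoints ps k) = 2"
  proof -
    have "(1-ps) * H = 1"
      using H unfolding ps_def by simp
    then show ?thesis
      using fixpoints_at_threshold ps unfolding H_def by simp
  qed
  have "p_star k = ps"
    unfolding p_star_def
  proof (rule the_equality)
    show "ps \<in> {1/9..<1/2} \<and> (\<forall>p. 0 \<le> p \<and> p < ps \<longrightarrow> card (fixpoints p k) = 3) \<and>
        card (fixpoints ps k) = 2 \<and> (\<forall>p. ps < p \<and> p \<le> 1 \<longrightarrow> fixpoints p k = {0})"
      using ps below above at by auto
  next
    fix ps' assume ps': "ps' \<in> {1/9..<1/2} \<and> (\<forall>p. 0 \<le> p \<and> p < ps' \<longrightarrow> card (fixpoints p k) = 3) \<and>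
        card (fixpoints ps' k) = 2 \<and> (\<forall>p. ps' < p \<and> p \<le> 1 \<longrightarrow> fixpoints p k = {0})"
    show "ps' = ps"
    proof (rule linorder_cases[of ps' ps])
      assume "ps' < ps"
      then show ?thesis using below[of ps'] ps' by simp
    next
      assume "ps < ps'"
      then show ?thesis using above[of ps'] ps' by simp
    qed
  qed
  then show ?thesis
    unfolding ps_def H_def .
qed

lemma F_iterates_converge:
  assumes "0 \<le> p" "p \<le> 1" "0 \<le> q" "q \<le> 1"
  obtains L where "(\<lambda>t. (F p k ^^ t) q) \<longlonglongrightarrow> L" "L \<in> fixpoints p k"
    "F p k q \<le> q \<Longrightarrow> L \<le> q" "q < F p k q \<Longrightarrow> q \<le> L"
proof -
  have "continuous_on {0..1} (F p k)" "mono_on {0..1} (F p k)" "q \<in> {0..1}"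
    using F_continuous_on F_mono_on assms by auto
  from iterates_mono_on_converge[OF this(1,2) F_self_map this(3)] show ?thesis
    using that unfolding fixpoints_def by blast
qed

lemma less_p_star_iff: "p < p_star k \<longleftrightarrow> 1 < (1-p) * majority_ratio_max m"
  using majority_ratio_max_ge[OF m_ge_2] by (simp add: p_star_eq field_simps)

lemma greater_p_star_iff: "p_star k < p \<longleftrightarrow> (1-p) * majority_ratio_max m < 1"
  using majority_ratio_max_ge[OF m_ge_2] by (simp add: p_star_eq field_simps)

lemma F_iterates_tendsto_above_threshold:
  assumes "p_star k < p" "p \<le> 1" "0 \<le> q" "q \<le> 1"
  shows "(\<lambda>t. (F p k ^^ t) q) \<longlonglongrightarrow> 0"
proof -
  have "0 \<le> p"
    using assms(1) less_p_star_iff[of 0] majority_ratio_max_ge[OF m_ge_2] by simp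
  moreover have "fixpoints p k = {0}"
    using fixpoints_above_threshold calculation assms greater_p_star_iff by simp
  ultimately show ?thesis
    using F_iterates_converge[of p q] assms by (metis singletonD)
qed

lemma F_iterates_tendsto_phi_plus:
  assumes "0 \<le> p" "p < p_star k" "phi_minus p k < q" "q \<le> 1"
  shows "(\<lambda>t. (F p k ^^ t) q) \<longlonglongrightarrow> phi_plus p k"
proof -
  have threshold: "1 < (1-p) * majority_ratio_max m"
    using assms less_p_star_iff by simp
  then have "p \<le> 1"
    using p_less_1_if_threshold_ge_1[of p] by simp
  note fp = fixpoints_below_threshold[OF \<open>0 \<le> p\<close> threshold]
  have q: "q \<in> {0..1}"
    using assms fp(2) by simp
  obtain L where L: "(\<lambda>t. (F p k ^^ t) q) \<longlonglongrightarrow> L" "L \<in> {0, phi_minus p k, phi_plus p k}"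
    and L_ge: "q < F p k q \<Longrightarrow> q \<le> L"
    using F_iterates_converge[of p q] \<open>0 \<le> p\<close> \<open>p \<le> 1\<close> q fp(1) by (metis atLeastAtMost_iff)
  show ?thesis
  proof (cases "phi_plus p k \<le> q")
    case True
    have "phi_plus p k \<in> {0..1}" "F p k (phi_plus p k) = phi_plus p k"
      using fp(1) unfolding fixpoints_def by auto
    then have "phi_plus p k \<le> (F p k ^^ t) q" for t
      using iterates_mono_on_le_fixpoint(2)[OF F_mono_on F_self_map _ _ q] True \<open>0 \<le> p\<close> \<open>p \<le> 1\<close>
      by blast
    then have "phi_plus p k \<le> L"
      using LIMSEQ_le_const[OF L(1)] by blast
    then show ?thesis
      using L fp(2,3) by auto
  next
    case False
    then have "q \<le> L"
      using L_ge fp(6)[of q] assms by simp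
    then show ?thesis
      using L fp(2) assms by auto
  qed
qed

lemma F_iterates_tendsto_0_below_phi_minus:
  assumes "0 \<le> p" "p < p_star k" "0 \<le> q" "q < phi_minus p k"
  shows "(\<lambda>t. (F p k ^^ t) q) \<longlonglongrightarrow> 0"
proof -
  have threshold: "1 < (1-p) * majority_ratio_max m"
    using assms less_p_star_iff by simp
  then have "p \<le> 1"
    using p_less_1_if_threshold_ge_1[of p] by simp
  note fp = fixpoints_below_threshold[OF \<open>0 \<le> p\<close> threshold]
  have "q \<le> 1"
    using assms fp(3,4) by simp
  have "F p k q \<le> q"
    using fp(5)[of q] assms F_0[OF \<open>0 \<le> p\<close> \<open>p \<le> 1\<close>] by (cases "q = 0") auto
  then obtain L where L: "(\<lambda>t. (F p k ^^ t) q) \<longlonglongrightarrow> L" "L \<in> {0, phi_minus p k, phi_plus p k}" "L \<le> q"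
    using F_iterates_converge[of p q] \<open>0 \<le> p\<close> \<open>p \<le> 1\<close> \<open>q \<le> 1\<close> assms(3) fp(1) by metis
  then show ?thesis
    using fp(3) assms by auto
qed

end

section \<open>Counting independent events\<close>

lemma prob_binomial_pmf_eq_sum_PiE_dflt:
  assumes "finite A" "0 \<le> r" "r \<le> 1"
  shows "measure_pmf.prob (binomial_pmf (card A) r) T
           = (\<Sum>f \<in> PiE_dflt A False (\<lambda>_. UNIV) \<inter> {f. card {i\<in>A. f i} \<in> T}. \<Prod>i\<in>A. pmf (bernoulli_pmf r) (f i))"
    (is "_ = (\<Sum>f\<in>?D. _)")
proof -
  let ?P = "Pi_pmf A False (\<lambda>_. bernoulli_pmf r)"
  have "finite ?D"
    using assms(1) by (intro finite_Int disjI1 finite_PiE_dflt) auto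
  have "binomial_pmf (card A) r = map_pmf (\<lambda>f. card {i\<in>A. f i}) ?P"
    by (rule binomial_pmf_altdef'[OF assms(1) refl]) (use assms in auto)
  then have "measure_pmf.prob (binomial_pmf (card A) r) T = measure_pmf.prob ?P ((\<lambda>f. card {i\<in>A. f i}) -` T)"
    by simp
  also have "\<dots> = measure_pmf.prob ?P ?D"
  proof (rule measure_prob_cong_0)
    fix f assume "f \<in> (\<lambda>f. card {i\<in>A. f i}) -` T - ?D"
    then have "\<exists>i. i \<notin> A \<and> f i \<noteq> False"
      unfolding PiE_dflt_def by auto
    then show "pmf ?P f = 0"
      by (rule pmf_Pi_outside[OF assms(1)])
  qed auto
  also have "\<dots> = (\<Sum>f\<in>?D. \<Prod>i\<in>A. pmf (bernoulli_pmf r) (f i))"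
    unfolding measure_measure_pmf_finite[OF \<open>finite ?D\<close>]
    by (intro sum.cong refl pmf_Pi'[OF assms(1)]) (auto simp: PiE_dflt_def)
  finally show ?thesis .
qed

lemma (in prob_space) prob_vimage_eq_pmf_bernoulli:
  assumes "random_variable (count_space UNIV) X" "prob {\<omega>\<in>space M. X \<omega>} = r" "0 \<le> r" "r \<le> 1"
  shows "prob (X -` {b} \<inter> space M) = pmf (bernoulli_pmf r) b"
proof (cases b)
  case True
  then have "X -` {b} \<inter> space M = {\<omega>\<in>space M. X \<omega>}"
    by auto
  then show ?thesis
    using assms True by simp
next
  case False
  then have "X -` {b} \<inter> space M = space M - {\<omega>\<in>space M. X \<omega>}"
    by auto
  moreover have "{\<omega>\<in>space M. X \<omega>} \<in> events"
    using measurable_sets[OF assms(1), of "{True}"] by (simp add: vimage_def Int_def conj_commute)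
  ultimately show ?thesis
    using assms False prob_compl by simp
qed

lemma (in prob_space) prob_card_binomial:
  fixes Z :: "'i \<Rightarrow> 'a \<Rightarrow> bool"
  assumes indep: "indep_vars (\<lambda>_. count_space UNIV) Z A" and "finite A" "A \<noteq> {}"
    and prob_Z: "\<And>i. i \<in> A \<Longrightarrow> prob {\<omega>\<in>space M. Z i \<omega>} = r" and r: "0 \<le> r" "r \<le> 1"
  shows "prob {\<omega>\<in>space M. card {i\<in>A. Z i \<omega>} \<in> T} = measure_pmf.prob (binomial_pmf (card A) r) T"
proof -
  define D where "D = PiE_dflt A False (\<lambda>_. UNIV) \<inter> {f. card {i\<in>A. f i} \<in> T}"
  define E where "E f = (\<Inter>i\<in>A. Z i -` {f i} \<inter> space M)" for f
  have "finite D"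
    unfolding D_def using \<open>finite A\<close> by (intro finite_Int disjI1 finite_PiE_dflt) auto
  have rv: "random_variable (count_space UNIV) (Z i)" if "i \<in> A" for i
    using indep that unfolding indep_vars_def by auto
  have E_events: "E f \<in> events" for f
    unfolding E_def using \<open>finite A\<close> \<open>A \<noteq> {}\<close> rv by (intro sets.finite_INT) (auto intro: measurable_sets)
  have event_eq: "{\<omega>\<in>space M. card {i\<in>A. Z i \<omega>} \<in> T} = (\<Union>f\<in>D. E f)"
  proof (intro equalityI subsetI)
    fix \<omega> assume \<omega>: "\<omega> \<in> {\<omega>\<in>space M. card {i\<in>A. Z i \<omega>} \<in> T}"
    define f where "f i = (i \<in> A \<and> Z i \<omega>)" for i
    have "{i\<in>A. f i} = {i\<in>A. Z i \<omega>}"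
      unfolding f_def by auto
    then have "f \<in> D" "\<omega> \<in> E f"
      using \<omega> unfolding D_def PiE_dflt_def E_def f_def by auto
    then show "\<omega> \<in> (\<Union>f\<in>D. E f)"
      by blast
  next
    fix \<omega> assume "\<omega> \<in> (\<Union>f\<in>D. E f)"
    then obtain f where f: "f \<in> D" "\<omega> \<in> E f"
      by blast
    then have "\<omega> \<in> space M" "{i\<in>A. Z i \<omega>} = {i\<in>A. f i}"
      using \<open>A \<noteq> {}\<close> unfolding E_def by auto
    then show "\<omega> \<in> {\<omega>\<in>space M. card {i\<in>A. Z i \<omega>} \<in> T}"
      using f(1) unfolding D_def by auto
  qed
  have "disjoint_family_on E D"
    unfolding disjoint_family_on_def
  proof (intro ballI impI)
    fix f g assume "f \<in> D" "g \<in> D" "f \<noteq> g"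
    then obtain i where "f i \<noteq> g i"
      by auto
    moreover from this have "i \<in> A"
      using \<open>f \<in> D\<close> \<open>g \<in> D\<close> unfolding D_def PiE_dflt_def by auto
    ultimately show "E f \<inter> E g = {}"
      unfolding E_def by auto
  qed
  have "prob {\<omega>\<in>space M. card {i\<in>A. Z i \<omega>} \<in> T} = (\<Sum>f\<in>D. prob (E f))"
    unfolding event_eq
    by (rule finite_measure_finite_Union[OF \<open>finite D\<close> _ \<open>disjoint_family_on E D\<close>]) (use E_events in auto)
  also have "\<dots> = (\<Sum>f\<in>D. \<Prod>i\<in>A. pmf (bernoulli_pmf r) (f i))"
    unfolding E_def using indep_varsD_finite[OF indep \<open>A \<noteq> {}\<close> \<open>finite A\<close>]
      prob_vimage_eq_pmf_bernoulli[OF rv prob_Z r] by simp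
  also have "\<dots> = measure_pmf.prob (binomial_pmf (card A) r) T"
    unfolding D_def using prob_binomial_pmf_eq_sum_PiE_dflt[OF \<open>finite A\<close> r] by simp
  finally show ?thesis .
qed

lemma (in product_prob_space) indep_vars_coordinates: "indep_vars M (\<lambda>i \<omega>. \<omega> i) I"
proof (cases "I = {}")
  case True
  show ?thesis
    unfolding P.indep_vars_def2 P.indep_sets_def using True by simp
next
  case False
  have "distr (PiM I M) (PiM I M) (\<lambda>\<omega>. \<lambda>i\<in>I. \<omega> i) = distr (PiM I M) (PiM I M) (\<lambda>\<omega>. \<omega>)"
    by (rule distr_cong) (auto simp: space_PiM PiE_def extensional_restrict)
  also have "\<dots> = PiM I M"
    by (rule distr_id)
  also have "\<dots> = PiM I (\<lambda>i. distr (PiM I M) (M i) (\<lambda>\<omega>. \<omega> i))"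
    by (rule PiM_cong) (simp_all add: PiM_component)
  finally show ?thesis
    using False by (subst indep_vars_iff_distr_eq_PiM') (auto intro: measurable_component_singleton)
qed

lemma (in product_prob_space) prob_PiM_coordinate:
  assumes "i \<in> I" "A \<in> sets (M i)"
  shows "prob {\<omega>\<in>space (PiM I M). \<omega> i \<in> A} = measure (M i) A"
  unfolding measure_def using emeasure_PiM_Collect_single[OF assms] by simp

section \<open>The Edge-Majority process\<close>

definition em_coin :: "real \<Rightarrow> real \<Rightarrow> em_index \<Rightarrow> bool measure" where
  "em_coin p q i = (case i of Inl _ \<Rightarrow> measure_pmf (bernoulli_pmf q) | Inr _ \<Rightarrow> measure_pmf (bernoulli_pmf p))"

lemma em_space_eq_PiM: "em_space p q = PiM UNIV (em_coin p q)"
  unfolding em_space_def em_coin_def ..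

lemma space_em_coin [simp]: "space (em_coin p q i) = UNIV"
  by (cases i) (auto simp: em_coin_def)

lemma sets_em_coin [simp]: "sets (em_coin p q i) = UNIV"
  by (cases i) (auto simp: em_coin_def)

interpretation em: product_prob_space "em_coin p q" UNIV for p q
  by (intro product_prob_spaceI) (auto simp: em_coin_def split: sum.split intro: prob_space_measure_pmf)

fun vertex_of :: "em_index \<Rightarrow> nat list" where
  "vertex_of (Inl v) = v"
| "vertex_of (Inr (v, _, _)) = v"

definition subtree_coords :: "nat list \<Rightarrow> em_index set" where
  "subtree_coords w = {j. \<exists>u. vertex_of j = w @ u}"

lemma subtree_coords_child: "subtree_coords (w @ [i]) \<subseteq> subtree_coords w"
  unfolding subtree_coords_def by auto

lemma em_state_local:
  assumes "\<And>j. j \<in> subtree_coords w \<Longrightarrow> \<omega> j = \<omega>' j"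
  shows "em_state k \<omega> w t = em_state k \<omega>' w t"
  using assms
proof (induction t arbitrary: w)
  case 0
  have "Inl w \<in> subtree_coords w"
    unfolding subtree_coords_def by auto
  then show ?case
    using 0 by simp
next
  case (Suc t)
  have "Inr (w, i, t) \<in> subtree_coords w" for i
    unfolding subtree_coords_def by auto
  moreover have "em_state k \<omega> (w @ [i]) t = em_state k \<omega>' (w @ [i]) t" for i
    using Suc.IH[of "w @ [i]"] Suc.prems subtree_coords_child by blast
  ultimately show ?case
    using Suc.prems by simp
qed

lemma pred_em_coordinate:
  assumes "j \<in> K"
  shows "Measurable.pred (PiM K (em_coin p q)) (\<lambda>\<omega>. \<omega> j)"
proof -
  have "measurable (PiM K (em_coin p q)) (em_coin p q j) = measurable (PiM K (em_coin p q)) (count_space UNIV)"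
    by (rule measurable_cong_sets) simp_all
  then show ?thesis
    using measurable_component_singleton[OF assms, of "em_coin p q"] by simp
qed

lemma measurable_em_state:
  assumes "subtree_coords w \<subseteq> K"
  shows "Measurable.pred (PiM K (em_coin p q)) (\<lambda>\<omega>. em_state k \<omega> w t)"
  using assms
proof (induction t arbitrary: w)
  case 0
  then have "Inl w \<in> K"
    unfolding subtree_coords_def by auto
  then show ?case
    by (simp add: pred_em_coordinate)
next
  case (Suc t)
  have [measurable]: "Measurable.pred (PiM K (em_coin p q)) (\<lambda>\<omega>. \<omega> (Inr (w, i, t)))" for i
    by (rule pred_em_coordinate) (use Suc.prems in \<open>auto simp: subtree_coords_def\<close>)
  have [measurable]: "Measurable.pred (PiM K (em_coin p q)) (\<lambda>\<omega>. em_state k \<omega> (w @ [i]) t)" for i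
    using Suc.IH Suc.prems subtree_coords_child by blast
  show ?case
    by simp measurable
qed

lemma indep_em_child_events:
  "prob_space.indep_vars (PiM UNIV (em_coin p q)) (\<lambda>_. count_space UNIV)
     (\<lambda>i \<omega>. \<not> \<omega> (Inr (w, i, t)) \<and> em_state k \<omega> (w @ [i]) t) I"
proof -
  define K where "K i = insert (Inr (w, i, t)) (subtree_coords (w @ [i]))" for i
  have "disjoint_family_on K I"
    unfolding disjoint_family_on_def K_def subtree_coords_def by auto
  then have indep_blocks: "em.indep_vars p q (\<lambda>i. PiM (K i) (em_coin p q)) (\<lambda>i \<omega>. restrict \<omega> (K i)) I"
    using em.indep_vars_restrict[OF em.indep_vars_coordinates] by simp
  define Y where "Y i x = (\<not> x (Inr (w, i, t)) \<and> em_state k x (w @ [i]) t)" for i x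
  have "Measurable.pred (PiM (K i) (em_coin p q)) (Y i)" for i
    unfolding Y_def K_def using pred_em_coordinate measurable_em_state by measurable auto
  then have "em.indep_vars p q (\<lambda>_. count_space UNIV) (\<lambda>i \<omega>. Y i (restrict \<omega> (K i))) I"
    by (rule em.indep_vars_compose2[OF indep_blocks])
  moreover have "em_state k (restrict \<omega> (K i)) (w @ [i]) t = em_state k \<omega> (w @ [i]) t" for i \<omega>
    by (rule em_state_local) (simp add: K_def)
  then have "Y i (restrict \<omega> (K i)) = (\<not> \<omega> (Inr (w, i, t)) \<and> em_state k \<omega> (w @ [i]) t)" for i \<omega>
    unfolding Y_def by (simp add: K_def)
  ultimately show ?thesis
    by simp
qed

lemma prob_em_child_event:
  assumes "0 \<le> p" "p \<le> 1"
  shows "measure (PiM UNIV (em_coin p q)) {\<omega> \<in> space (PiM UNIV (em_coin p q)). \<not> \<omega> (Inr (w, i, t)) \<and> em_state k \<omega> (w @ [i]) t}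
       = (1 - p) * measure (PiM UNIV (em_coin p q)) {\<omega> \<in> space (PiM UNIV (em_coin p q)). em_state k \<omega> (w @ [i]) t}"
proof -
  let ?M = "PiM UNIV (em_coin p q)"
  let ?A = "{Inr (w, i, t)}" and ?B = "subtree_coords (w @ [i])"
  have "?A \<inter> ?B = {}"
    unfolding subtree_coords_def by auto
  then have indep: "em.indep_var p q (PiM ?A (em_coin p q)) (\<lambda>\<omega>. restrict \<omega> ?A)
                                    (PiM ?B (em_coin p q)) (\<lambda>\<omega>. restrict \<omega> ?B)"
    using em.indep_var_restrict[OF em.indep_vars_coordinates] by simp
  define Xa where "Xa = {x \<in> space (PiM ?A (em_coin p q)). \<not> x (Inr (w, i, t))}"
  define Xb where "Xb = {x \<in> space (PiM ?B (em_coin p q)). em_state k x (w @ [i]) t}"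
  have Xa: "Xa \<in> sets (PiM ?A (em_coin p q))"
    unfolding Xa_def by (intro predE pred_intros_logic(2) pred_em_coordinate) simp
  have Xb: "Xb \<in> sets (PiM ?B (em_coin p q))"
    unfolding Xb_def by (intro predE measurable_em_state) simp
  have local: "em_state k (restrict \<omega> ?B) (w @ [i]) t = em_state k \<omega> (w @ [i]) t" for \<omega>
    by (rule em_state_local) auto
  have "(\<lambda>\<omega>. (restrict \<omega> ?A, restrict \<omega> ?B)) -` (Xa \<times> Xb) \<inter> space ?M
      = {\<omega> \<in> space ?M. \<not> \<omega> (Inr (w, i, t)) \<and> em_state k \<omega> (w @ [i]) t}"
    unfolding Xa_def Xb_def using local by (auto simp: space_PiM)
  moreover have "(\<lambda>\<omega>. restrict \<omega> ?A) -` Xa \<inter> space ?M = {\<omega> \<in> space ?M. \<omega> (Inr (w, i, t)) \<in> {False}}"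
    unfolding Xa_def by (auto simp: space_PiM)
  moreover have "(\<lambda>\<omega>. restrict \<omega> ?B) -` Xb \<inter> space ?M = {\<omega> \<in> space ?M. em_state k \<omega> (w @ [i]) t}"
    unfolding Xb_def using local by (auto simp: space_PiM)
  moreover have "measure (em_coin p q (Inr (w, i, t))) {False} = 1 - p"
    using assms by (simp add: em_coin_def measure_pmf_single)
  then have "measure ?M {\<omega> \<in> space ?M. \<omega> (Inr (w, i, t)) \<in> {False}} = 1 - p"
    using em.prob_PiM_coordinate[of "Inr (w, i, t)" "{False}" p q] by simp
  ultimately show ?thesis
    using em.indep_varD[OF indep Xa Xb] by simp
qed

lemma prob_em_state:
  assumes "0 \<le> p" "p \<le> 1" "0 \<le> q" "q \<le> 1" "k \<ge> 1"
  shows "measure (em_space p q) {\<omega> \<in> space (em_space p q). em_state k \<omega> w t} = (F p k ^^ t) q"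
  unfolding em_space_eq_PiM
proof (induction t arbitrary: w)
  case 0
  have "measure (em_coin p q (Inl w)) {True} = q"
    using assms by (simp add: em_coin_def measure_pmf_single)
  then show ?case
    using em.prob_PiM_coordinate[of "Inl w" "{True}" p q] by simp
next
  case (Suc t)
  let ?M = "PiM UNIV (em_coin p q)"
  define r where "r = (F p k ^^ t) q"
  have "(F p k ^^ n) q \<in> {0..1}" for n
    unfolding F_def using assms by (induction n) auto
  then have r: "0 \<le> r" "r \<le> 1"
    unfolding r_def by simp_all
  have "{\<omega> \<in> space ?M. em_state k \<omega> w (Suc t)}
      = {\<omega> \<in> space ?M. card {i \<in> {..<k}. \<not> \<omega> (Inr (w, i, t)) \<and> em_state k \<omega> (w @ [i]) t} \<in> {j. k + 1 \<le> 2 * j}}"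
    by (auto simp: conj_commute)
  also have "measure ?M \<dots> = measure_pmf.prob (binomial_pmf (card {..<k}) ((1 - p) * r)) {j. k + 1 \<le> 2 * j}"
    using indep_em_child_events prob_em_child_event Suc.IH[folded r_def] r assms
    by (intro em.prob_card_binomial) (auto simp: mult_le_one lessThan_empty_iff)
  also have "\<dots> = F p k r"
    unfolding F_def by simp
  finally show ?case
    unfolding r_def by simp
qed

theorem theorem4p3:
  fixes k :: nat and p q :: real
  assumes "odd k" and "k \<ge> 3"
    and "0 \<le> p" and "p \<le> 1" and "0 \<le> q" and "q \<le> 1"
  shows "(p < p_star k \<and> q > phi_minus p k \<longrightarrow>
            (\<lambda>t. prob_root_R k p q t) \<longlonglongrightarrow> phi_plus p k)
       \<and> (p < p_star k \<and> q < phi_minus p k \<longrightarrow>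
            (\<lambda>t. prob_root_R k p q t) \<longlonglongrightarrow> 0)
       \<and> (p > p_star k \<longrightarrow> (\<lambda>t. prob_root_R k p q t) \<longlonglongrightarrow> 0)"
proof -
  obtain m where k_eq: "k = 2*m - 1" and m: "m \<ge> 2"
    using assms(1,2) by (elim oddE) (auto intro!: that[of "_ + 1"])
  have "prob_root_R k p q t = (F p k ^^ t) q" for t
    unfolding prob_root_R_def using prob_em_state assms by simp
  then show ?thesis
    using F_iterates_tendsto_phi_plus[OF k_eq m] F_iterates_tendsto_0_below_phi_minus[OF k_eq m]
      F_iterates_tendsto_above_threshold[OF k_eq m] assms
    by simp
qed

end
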